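(* Let $T$ be a subcubic tree of order $n$ and dissociation number $\psi$. If $\psi=\frac{4n+2}{5}$, then $T$ has exactly one maximum dissociation set, i.e., $\Phi(T)=1$.
   Context: All graphs are finite, simple and undirected. A subcubic tree is a tree of maximum degree at most $3$. A dissociation set in a graph $G$ is a vertex subset $F$ such that the induced subgraph $G[F]$ has maximum degree at most $1$; a maximum dissociation set is one of maximum cardinality, and the dissociation number $\psi(G)$ is that cardinality. $\Phi(G)$ denotes the number of maximum dissociation sets of $G$. *)

theory Defs
  imports Main
begin

definition graph :: "'a set \<Rightarrow> 'a set set \<Rightarrow> bool" where
  "graph V E \<longleftrightarrow> finite V \<and> (\<forall>e\<in>E. e \<subseteq> V \<and> card e = 2)"

definition adj :: "'a set set \<Rightarrow> 'a \<Rightarrow> 'a \<Rightarrow> bool" where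
  "adj E u v \<longleftrightarrow> {u, v} \<in> E"

definition degree :: "'a set set \<Rightarrow> 'a \<Rightarrow> nat" where
  "degree E v = card {u. adj E v u}"

definition walk :: "'a set set \<Rightarrow> 'a list \<Rightarrow> bool" where
  "walk E xs \<longleftrightarrow> xs \<noteq> [] \<and> (\<forall>i. Suc i < length xs \<longrightarrow> adj E (xs ! i) (xs ! Suc i))"

definition connected_graph :: "'a set \<Rightarrow> 'a set set \<Rightarrow> bool" where
  "connected_graph V E \<longleftrightarrow> V \<noteq> {} \<and>
     (\<forall>u\<in>V. \<forall>v\<in>V. \<exists>xs. walk E xs \<and> hd xs = u \<and> last xs = v)"

definition is_cycle :: "'a set set \<Rightarrow> 'a list \<Rightarrow> bool" where
  "is_cycle E xs \<longleftrightarrow> length xs \<ge> 3 \<and> distinct xs \<and> walk E xs \<and> adj E (last xs) (hd xs)"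

definition tree :: "'a set \<Rightarrow> 'a set set \<Rightarrow> bool" where
  "tree V E \<longleftrightarrow> graph V E \<and> connected_graph V E \<and> \<not> (\<exists>xs. is_cycle E xs)"

definition subcubic_tree :: "'a set \<Rightarrow> 'a set set \<Rightarrow> bool" where
  "subcubic_tree V E \<longleftrightarrow> tree V E \<and> (\<forall>v\<in>V. degree E v \<le> 3)"

definition dissociation_set :: "'a set \<Rightarrow> 'a set set \<Rightarrow> 'a set \<Rightarrow> bool" where
  "dissociation_set V E F \<longleftrightarrow> F \<subseteq> V \<and>
     (\<forall>v\<in>F. card {u\<in>F. adj E v u} \<le> 1)"

definition dissociation_number :: "'a set \<Rightarrow> 'a set set \<Rightarrow> nat" where
  "dissociation_number V E = Max (card ` {F. dissociation_set V E F})"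

definition max_dissociation_set :: "'a set \<Rightarrow> 'a set set \<Rightarrow> 'a set \<Rightarrow> bool" where
  "max_dissociation_set V E F \<longleftrightarrow> dissociation_set V E F \<and>
     card F = dissociation_number V E"

definition num_max_dissociation_sets :: "'a set \<Rightarrow> 'a set set \<Rightarrow> nat" where
  "num_max_dissociation_sets V E = card {F. max_dissociation_set V E F}"

end

theory Submission
  imports Defs
begin

text \<open>
  Let F be a dissociation set and S = V - F. The edges inside F form a matching, so there are at
  most |F|/2 of them, and every other edge meets S, so these are counted by the degrees in S,
  edges inside S being counted twice. In a subcubic tree, n - 1 = |E| \<le> |F|/2 + 3|S| gives
  5|F| \<le> 4n + 2, and equality forces S to be an independent set of vertices of degree 3.
  If F' is a second maximum dissociation set, a vertex of F' - F has three neighbours, at most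
  one of them in F', and the others lie outside S by independence, so in F - F'; symmetrically
  for F - F'. Thus every vertex of the symmetric difference has two neighbours inside it, which
  yields a cycle.
\<close>

lemma adj_commute: "adj E u v \<longleftrightarrow> adj E v u"
  by (simp add: adj_def insert_commute)

lemma graph_adj_irrefl: "graph V E \<Longrightarrow> \<not> adj E v v"
  unfolding graph_def adj_def by fastforce

lemma graph_adj_in_vertices: "graph V E \<Longrightarrow> adj E u v \<Longrightarrow> u \<in> V \<and> v \<in> V"
  unfolding graph_def adj_def by blast

lemma graph_finite_edges:
  assumes "graph V E"
  shows "finite E"
proof -
  have "E \<subseteq> Pow V" "finite V" using assms unfolding graph_def by auto
  then show ?thesis by (metis finite_Pow_iff finite_subset)
qed

lemma graph_edgeE:
  assumes "graph V E" "e \<in> E"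
  obtains x y where "e = {x, y}" "x \<noteq> y"
proof -
  have "card e = 2" using assms unfolding graph_def by blast
  then show thesis using that unfolding card_2_iff by blast
qed

lemma incident_edgeE:
  assumes "graph V E" "e \<in> E" "v \<in> e"
  obtains u where "e = {v, u}" "u \<noteq> v"
proof -
  obtain x y where e: "e = {x, y}" "x \<noteq> y" using graph_edgeE[OF assms(1,2)] .
  show thesis
  proof (cases "v = x")
    case True
    then show thesis using that[of y] e by simp
  next
    case False
    then have "v = y" using assms(3) e by blast
    moreover have "{x, y} = {y, x}" by (rule insert_commute)
    ultimately show thesis using that[of x] e by simp
  qed
qed

lemma card_incident_edges_within:
  assumes "graph V E" "v \<in> B"
  shows "card {e\<in>E. v \<in> e \<and> e \<subseteq> B} = card {u\<in>B. adj E v u}"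
proof -
  have "{e\<in>E. v \<in> e \<and> e \<subseteq> B} = (\<lambda>u. {v, u}) ` {u\<in>B. adj E v u}"
    using assms by (auto simp: adj_def elim!: incident_edgeE)
  moreover have "inj_on (\<lambda>u. {v, u}) {u\<in>B. adj E v u}"
    by (auto intro!: inj_onI simp: doubleton_eq_iff)
  ultimately show ?thesis by (simp add: card_image)
qed

lemma card_incident_edges:
  assumes "graph V E"
  shows "card {e\<in>E. v \<in> e} = degree E v"
proof (cases "v \<in> V")
  case True
  have "{e\<in>E. v \<in> e} = {e\<in>E. v \<in> e \<and> e \<subseteq> V}" "{u\<in>V. adj E v u} = {u. adj E v u}"
    using assms graph_adj_in_vertices[OF assms] unfolding graph_def by auto
  then show ?thesis
    using card_incident_edges_within[OF assms True] by (simp add: degree_def)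
next
  case False
  then have "{e\<in>E. v \<in> e} = {}" "{u. adj E v u} = {}"
    using assms graph_adj_in_vertices[OF assms] unfolding graph_def by auto
  then show ?thesis unfolding degree_def by (simp only: card.empty)
qed

lemma sum_card_incident_eq_sum_card_Int:
  assumes "finite A" "finite X"
  shows "(\<Sum>v\<in>A. card {e\<in>X. v \<in> e}) = (\<Sum>e\<in>X. card (e \<inter> A))"
proof -
  have "card {e\<in>X. v \<in> e} = (\<Sum>e\<in>X. if v \<in> e then 1 else 0)" for v
    using sum.inter_filter[OF assms(2), of "\<lambda>_. 1::nat"] by simp
  moreover have "card (e \<inter> A) = (\<Sum>v\<in>A. if v \<in> e then 1 else 0)" for e
    using sum.inter_filter[OF assms(1), of "\<lambda>_. 1::nat" "\<lambda>v. v \<in> e"] by (simp add: Int_def conj_commute)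
  ultimately show ?thesis by (simp add: sum.swap[of _ A])
qed

lemma card_edge_Int:
  assumes "graph V E" "e \<in> E"
  shows "card (e \<inter> S) = (if e \<inter> S \<noteq> {} then 1 else 0) + (if e \<subseteq> S then 1 else 0)"
proof -
  obtain x y where e: "e = {x, y}" "x \<noteq> y" using graph_edgeE[OF assms] .
  show ?thesis
  proof (cases "x \<in> S"; cases "y \<in> S")
    assume "x \<in> S" "y \<in> S"
    then show ?thesis using e by simp
  next
    assume "x \<in> S" "y \<notin> S"
    then have "e \<inter> S = {x}" using e by blast
    then show ?thesis using e \<open>y \<notin> S\<close> by auto
  next
    assume "x \<notin> S" "y \<in> S"
    then have "e \<inter> S = {y}" using e by blast
    then show ?thesis using e \<open>x \<notin> S\<close> by auto
  next
    assume "x \<notin> S" "y \<notin> S"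
    then have "e \<inter> S = {}" "\<not> e \<subseteq> S" using e by blast+
    then show ?thesis by simp
  qed
qed

lemma sum_card_Int_edges:
  assumes "graph V E"
  shows "(\<Sum>e\<in>E. card (e \<inter> S)) = card {e\<in>E. e \<inter> S \<noteq> {}} + card {e\<in>E. e \<subseteq> S}"
  using graph_finite_edges[OF assms]
  by (simp add: card_edge_Int[OF assms] sum.distrib sum.inter_filter[symmetric] cong: sum.cong)

lemma dissociation_set_edge_count:
  assumes g: "graph V E" and F: "dissociation_set V E F"
  defines "S \<equiv> V - F"
  shows "2 * card E + 2 * card {e\<in>E. e \<subseteq> S} \<le> card F + 2 * (\<Sum>v\<in>S. degree E v)"
proof -
  define EF where "EF = {e\<in>E. e \<subseteq> F}"
  define ES where "ES = {e\<in>E. e \<inter> S \<noteq> {}}"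
  have finite: "finite V" "finite F" "finite S" "finite E"
    using g F graph_finite_edges[OF g] unfolding graph_def dissociation_set_def S_def
    by (auto intro: finite_subset)
  have "E = EF \<union> ES" "EF \<inter> ES = {}"
    using g unfolding EF_def ES_def S_def graph_def by blast+
  then have card_E: "card E = card EF + card ES"
    using finite by (simp add: card_Un_disjoint)
  have "2 * card EF = (\<Sum>e\<in>EF. card (e \<inter> F))"
    using g unfolding EF_def graph_def by (simp add: Int_absorb2)
  also have "\<dots> = (\<Sum>v\<in>F. card {e\<in>EF. v \<in> e})"
    using finite sum_card_incident_eq_sum_card_Int[of F EF] unfolding EF_def by simp
  also have "\<dots> \<le> (\<Sum>v\<in>F. 1)"
  proof (rule sum_mono)
    fix v assume "v \<in> F"
    moreover have "{e\<in>EF. v \<in> e} = {e\<in>E. v \<in> e \<and> e \<subseteq> F}"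
      unfolding EF_def by blast
    ultimately have "card {e\<in>EF. v \<in> e} = card {u\<in>F. adj E v u}"
      using card_incident_edges_within[OF g] by simp
    then show "card {e\<in>EF. v \<in> e} \<le> 1"
      using F \<open>v \<in> F\<close> unfolding dissociation_set_def by simp
  qed
  finally have inside: "2 * card EF \<le> card F" by simp
  have "card ES + card {e\<in>E. e \<subseteq> S} = (\<Sum>e\<in>E. card (e \<inter> S))"
    using sum_card_Int_edges[OF g] unfolding ES_def ..
  also have "\<dots> = (\<Sum>v\<in>S. degree E v)"
    using finite sum_card_incident_eq_sum_card_Int[of S E] by (simp add: card_incident_edges[OF g])
  finally show ?thesis using card_E inside by linarith
qed

definition independent_set :: "'a set set \<Rightarrow> 'a set \<Rightarrow> bool" where
  "independent_set E S \<longleftrightarrow> (\<forall>u\<in>S. \<forall>v\<in>S. \<not> adj E u v)"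

lemma tight_dissociation_set_complement:
  assumes g: "graph V E" and deg: "\<forall>v\<in>V. degree E v \<le> 3" and edges: "card V \<le> card E + 1"
    and F: "dissociation_set V E F" and tight: "5 * card F = 4 * card V + 2"
  shows "independent_set E (V - F)" and "\<forall>v\<in>V - F. degree E v = 3"
proof -
  define S where "S = V - F"
  have finite: "finite V" "finite S" "finite {e\<in>E. e \<subseteq> S}"
    using g graph_finite_edges[OF g] unfolding graph_def S_def by auto
  have "card V = card F + card S"
    using F finite unfolding dissociation_set_def S_def
    by (metis card_Diff_subset card_mono finite_subset le_add_diff_inverse)
  moreover have "(\<Sum>v\<in>S. degree E v) \<le> 3 * card S"
    using sum_mono[of S "degree E" "\<lambda>_. 3"] deg unfolding S_def by simp
  moreover note dissociation_set_edge_count[OF g F, folded S_def]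
  ultimately have no_inner_edge: "card {e\<in>E. e \<subseteq> S} = 0"
    and sum_deg: "(\<Sum>v\<in>S. degree E v) = 3 * card S"
    using edges tight by linarith+
  have "(\<Sum>v\<in>S. 3 - degree E v) = (\<Sum>v\<in>S. 3) - (\<Sum>v\<in>S. degree E v)"
    using deg by (intro sum_subtractf_nat) (simp add: S_def)
  then have "(\<Sum>v\<in>S. 3 - degree E v) = 0"
    using sum_deg by simp
  then have "\<forall>v\<in>S. degree E v = 3"
    using deg finite unfolding S_def by (auto intro: le_antisym)
  moreover have "{e\<in>E. e \<subseteq> S} = {}"
    using no_inner_edge finite by simp
  then have "independent_set E S"
    unfolding independent_set_def adj_def by blast
  ultimately show "independent_set E (V - F)" and "\<forall>v\<in>V - F. degree E v = 3"
    unfolding S_def by blast+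
qed

lemma two_neighbours_in_Diff:
  assumes g: "graph V E" and indep: "independent_set E (V - F)"
    and deg: "\<forall>v\<in>V - F. degree E v = 3" and F': "dissociation_set V E F'" and v: "v \<in> F' - F"
  obtains u1 u2 where "u1 \<noteq> u2" "u1 \<in> F - F'" "u2 \<in> F - F'" "adj E v u1" "adj E v u2"
proof -
  define N where "N = {u. adj E v u}"
  have "v \<in> V - F" using F' v unfolding dissociation_set_def by auto
  then have card_N: "card N = 3" using deg unfolding N_def degree_def by simp
  have "card (N \<inter> F') \<le> 1"
    using F' v unfolding dissociation_set_def N_def by (simp add: Int_def conj_commute)
  moreover have "card N = card (N \<inter> F') + card (N - F')"
    using card_N by (intro card_Int_Diff) (simp add: card_ge_0_finite)
  ultimately have "2 \<le> card (N - F')" using card_N by linarith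
  then obtain u1 u2 where u: "u1 \<in> N - F'" "u2 \<in> N - F'" "u1 \<noteq> u2"
    by (auto simp: numeral_2_eq_2 card_le_Suc_iff)
  have "N \<subseteq> F"
    using indep \<open>v \<in> V - F\<close> graph_adj_in_vertices[OF g] unfolding independent_set_def N_def by blast
  then show thesis using that u unfolding N_def by blast
qed

lemma walk_Cons:
  assumes "xs \<noteq> []"
  shows "walk E (u # xs) \<longleftrightarrow> adj E u (hd xs) \<and> walk E xs"
proof -
  have "(\<forall>i. Suc i < length (u # xs) \<longrightarrow> P i) \<longleftrightarrow> P 0 \<and> (\<forall>i. Suc i < length xs \<longrightarrow> P (Suc i))"
    for P using assms by (auto simp: less_Suc_eq_0_disj) (metis Suc_less_eq not0_implies_Suc)
  then show ?thesis using assms unfolding walk_def by (simp add: hd_conv_nth)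
qed

lemma walk_take: "walk E xs \<Longrightarrow> 0 < k \<Longrightarrow> walk E (take k xs)"
  unfolding walk_def by auto

lemma is_cycle_take_adj_hd:
  assumes "walk E xs" "distinct xs" "2 \<le> i" "i < length xs" "adj E (xs ! i) (hd xs)"
  shows "is_cycle E (take (Suc i) xs)"
proof -
  have "last (take (Suc i) xs) = xs ! i"
    using assms(4) by (simp add: take_Suc_conv_app_nth)
  then show ?thesis
    using assms walk_take[OF assms(1)] unfolding is_cycle_def by simp
qed

lemma longest_path_exists:
  assumes "finite A" "a \<in> A"
  obtains xs where "walk E xs" "distinct xs" "set xs \<subseteq> A"
    "\<And>ys. walk E ys \<Longrightarrow> distinct ys \<Longrightarrow> set ys \<subseteq> A \<Longrightarrow> length ys \<le> length xs"
proof -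
  define P where "P k \<longleftrightarrow> (\<exists>xs. walk E xs \<and> distinct xs \<and> set xs \<subseteq> A \<and> length xs = k)" for k
  have P1: "P 1" unfolding P_def using assms by (intro exI[of _ "[a]"]) (auto simp: walk_def)
  have bounded: "\<forall>k. P k \<longrightarrow> k \<le> card A"
  proof (intro allI impI)
    fix k assume "P k"
    then obtain xs where "distinct xs" "set xs \<subseteq> A" "length xs = k" unfolding P_def by blast
    then show "k \<le> card A" using assms(1) by (metis card_mono distinct_card)
  qed
  obtain k where "P k" and k_max: "\<And>k'. P k' \<Longrightarrow> k' \<le> k"
    using Nat.ex_has_greatest_nat[OF P1 bounded] by blast
  then obtain xs where xs: "walk E xs" "distinct xs" "set xs \<subseteq> A" "length xs = k"
    unfolding P_def by blast
  moreover have "length ys \<le> length xs" if "walk E ys" "distinct ys" "set ys \<subseteq> A" for ys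
    using k_max[of "length ys"] that xs(4) unfolding P_def by blast
  ultimately show thesis using that by blast
qed

lemma cycle_exists_if_two_neighbours:
  assumes g: "graph V E" and "finite A" "A \<noteq> {}"
    and two: "\<And>v. v \<in> A \<Longrightarrow> \<exists>u1 u2. u1 \<noteq> u2 \<and> u1 \<in> A \<and> u2 \<in> A \<and> adj E v u1 \<and> adj E v u2"
  shows "\<exists>xs. is_cycle E xs"
proof -
  obtain xs where xs: "walk E xs" "distinct xs" "set xs \<subseteq> A"
    and longest: "\<And>ys. walk E ys \<Longrightarrow> distinct ys \<Longrightarrow> set ys \<subseteq> A \<Longrightarrow> length ys \<le> length xs"
    using longest_path_exists[OF \<open>finite A\<close>] \<open>A \<noteq> {}\<close> by blast
  have "xs \<noteq> []" using xs(1) unfolding walk_def by simp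
  define x where "x = hd xs"
  have "x \<in> A" using xs(3) \<open>xs \<noteq> []\<close> unfolding x_def by auto
  then obtain w where w: "w \<in> A" "adj E x w" "w \<noteq> xs ! 1"
    using two by metis
  have "w \<in> set xs"
  proof (rule ccontr)
    assume "w \<notin> set xs"
    moreover have "adj E w (hd xs)" using w(2) adj_commute unfolding x_def by metis
    ultimately have "walk E (w # xs)" "distinct (w # xs)" "set (w # xs) \<subseteq> A"
      using xs w(1) walk_Cons[OF \<open>xs \<noteq> []\<close>] by auto
    then show False using longest by fastforce
  qed
  then obtain i where i: "i < length xs" "xs ! i = w" by (auto simp: in_set_conv_nth)
  have "x = xs ! 0" unfolding x_def using \<open>xs \<noteq> []\<close> by (simp add: hd_conv_nth)
  then have "i \<noteq> 0" using i w(2) graph_adj_irrefl[OF g] by metis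
  moreover have "i \<noteq> 1" using i w(3) by auto
  moreover have "adj E (xs ! i) (hd xs)" using i w(2) adj_commute unfolding x_def by metis
  ultimately have "is_cycle E (take (Suc i) xs)"
    using is_cycle_take_adj_hd[OF xs(1,2)] i(1) by simp
  then show ?thesis by blast
qed

lemma acyclic_tight_dissociation_sets_unique:
  assumes g: "graph V E" and acyclic: "\<not> (\<exists>xs. is_cycle E xs)"
    and F1: "dissociation_set V E F1" "independent_set E (V - F1)" "\<forall>v\<in>V - F1. degree E v = 3"
    and F2: "dissociation_set V E F2" "independent_set E (V - F2)" "\<forall>v\<in>V - F2. degree E v = 3"
  shows "F1 = F2"
proof (rule ccontr)
  assume "F1 \<noteq> F2"
  define A where "A = (F1 - F2) \<union> (F2 - F1)"
  have "A \<noteq> {}" using \<open>F1 \<noteq> F2\<close> unfolding A_def by blast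
  moreover have "finite A"
    using g F1(1) F2(1) unfolding A_def graph_def dissociation_set_def by (auto intro: finite_subset)
  moreover have "\<exists>u1 u2. u1 \<noteq> u2 \<and> u1 \<in> A \<and> u2 \<in> A \<and> adj E v u1 \<and> adj E v u2" if "v \<in> A" for v
    using that two_neighbours_in_Diff[OF g F1(2,3) F2(1)] two_neighbours_in_Diff[OF g F2(2,3) F1(1)]
    unfolding A_def by (metis Un_iff)
  ultimately show False using cycle_exists_if_two_neighbours[OF g] acyclic by blast
qed

text \<open>The number of vertices of a shortest walk from r to v, i.e. their distance plus one;
  unspecified if there is no such walk.\<close>

definition walk_dist :: "'a set set \<Rightarrow> 'a \<Rightarrow> 'a \<Rightarrow> nat" where
  "walk_dist E r v = (LEAST k. \<exists>xs. walk E xs \<and> hd xs = r \<and> last xs = v \<and> length xs = k)"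

lemma walk_dist_le: "walk E xs \<Longrightarrow> hd xs = r \<Longrightarrow> last xs = v \<Longrightarrow> walk_dist E r v \<le> length xs"
  unfolding walk_dist_def by (rule Least_le) blast

lemma shortest_walk_exists:
  assumes "walk E xs" "hd xs = r" "last xs = v"
  obtains ys where "walk E ys" "hd ys = r" "last ys = v" "length ys = walk_dist E r v"
proof -
  have "\<exists>k ys. walk E ys \<and> hd ys = r \<and> last ys = v \<and> length ys = k" using assms by blast
  then have "\<exists>ys. walk E ys \<and> hd ys = r \<and> last ys = v \<and> length ys = walk_dist E r v"
    unfolding walk_dist_def by (rule LeastI_ex)
  then show thesis using that by blast
qed

lemma closer_neighbour_exists:
  assumes "walk E xs" "hd xs = r" "last xs = v" "v \<noteq> r"
  obtains u where "adj E v u" "walk_dist E r u < walk_dist E r v"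
proof -
  obtain ys where ys: "walk E ys" "hd ys = r" "last ys = v" "length ys = walk_dist E r v"
    using shortest_walk_exists[OF assms(1-3)] .
  have "ys \<noteq> []" using ys(1) unfolding walk_def by simp
  have "length ys \<noteq> 1"
  proof
    assume "length ys = 1"
    then obtain a where "ys = [a]" by (cases ys) auto
    then show False using ys(2,3) assms(4) by simp
  qed
  moreover have "length ys \<noteq> 0" using \<open>ys \<noteq> []\<close> by simp
  ultimately obtain n where n: "length ys = Suc (Suc n)"
    by (metis One_nat_def not0_implies_Suc)
  define zs where "zs = take (Suc n) ys"
  have "walk E zs" unfolding zs_def using walk_take[OF ys(1)] by simp
  moreover have "hd zs = r" unfolding zs_def using ys(2) by simp
  moreover have "last zs = ys ! n" unfolding zs_def using n by (simp add: take_Suc_conv_app_nth)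
  ultimately have "walk_dist E r (ys ! n) < walk_dist E r v"
    using walk_dist_le[of E zs] n ys(4) unfolding zs_def by fastforce
  moreover have "adj E (ys ! n) (ys ! Suc n)" using ys(1) n unfolding walk_def by simp
  moreover have "ys ! Suc n = v" using ys(3) n \<open>ys \<noteq> []\<close> by (simp add: last_conv_nth)
  ultimately have "adj E v (ys ! n)" "walk_dist E r (ys ! n) < walk_dist E r v"
    using adj_commute by metis+
  then show thesis using that by blast
qed

lemma card_vertices_le_Suc_card_edges:
  assumes g: "graph V E" and c: "connected_graph V E"
  shows "card V \<le> card E + 1"
proof -
  obtain r where r: "r \<in> V" using c unfolding connected_graph_def by auto
  define closer where "closer v u \<longleftrightarrow> adj E v u \<and> walk_dist E r u < walk_dist E r v" for v u
  define parent where "parent v = (SOME u. closer v u)" for v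
  have parent: "closer v (parent v)" if "v \<in> V - {r}" for v
  proof -
    have "v \<in> V" "v \<noteq> r" using that by simp_all
    then obtain xs where xs: "walk E xs" "hd xs = r" "last xs = v"
      using c r unfolding connected_graph_def by blast
    obtain u where "closer v u"
      using closer_neighbour_exists[OF xs \<open>v \<noteq> r\<close>] unfolding closer_def by blast
    then show ?thesis unfolding parent_def by (rule someI)
  qed
  have "inj_on (\<lambda>v. {v, parent v}) (V - {r})"
  proof
    fix v w assume v: "v \<in> V - {r}" and w: "w \<in> V - {r}" and eq: "{v, parent v} = {w, parent w}"
    show "v = w"
    proof (rule ccontr)
      assume "v \<noteq> w"
      then have "v = parent w" "w = parent v" using eq by (auto simp: doubleton_eq_iff)
      then show False using parent[OF v] parent[OF w] unfolding closer_def by simp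
    qed
  qed
  moreover have "(\<lambda>v. {v, parent v}) ` (V - {r}) \<subseteq> E"
    using parent unfolding closer_def adj_def by auto
  ultimately have "card (V - {r}) \<le> card E"
    using graph_finite_edges[OF g] by (metis card_image card_mono)
  then show ?thesis using r by simp
qed

lemma max_dissociation_set_exists:
  assumes "graph V E"
  obtains F where "max_dissociation_set V E F"
proof -
  have "{F. dissociation_set V E F} \<subseteq> Pow V" unfolding dissociation_set_def by auto
  then have "finite (card ` {F. dissociation_set V E F})"
    using assms unfolding graph_def by (meson finite_Pow_iff finite_imageI finite_subset)
  moreover have "{} \<in> {F. dissociation_set V E F}" unfolding dissociation_set_def by simp
  ultimately have "dissociation_number V E \<in> card ` {F. dissociation_set V E F}"
    unfolding dissociation_number_def by (intro Max_in) auto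
  then show thesis using that unfolding max_dissociation_set_def by auto
qed

theorem corollary3p3:
  fixes V :: "'a set" and E :: "'a set set"
  assumes "subcubic_tree V E"
    and "5 * dissociation_number V E = 4 * card V + 2"
  shows "num_max_dissociation_sets V E = 1"
proof -
  have g: "graph V E" and c: "connected_graph V E" and acyclic: "\<not> (\<exists>xs. is_cycle E xs)"
    and deg: "\<forall>v\<in>V. degree E v \<le> 3"
    using assms(1) unfolding subcubic_tree_def tree_def by auto
  have edges: "card V \<le> card E + 1" using card_vertices_le_Suc_card_edges[OF g c] .
  have tight: "dissociation_set V E F \<and> independent_set E (V - F) \<and> (\<forall>v\<in>V - F. degree E v = 3)"
    if "max_dissociation_set V E F" for F
    using that tight_dissociation_set_complement[OF g deg edges] assms(2)
    unfolding max_dissociation_set_def by metis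
  obtain F0 where F0: "max_dissociation_set V E F0" using max_dissociation_set_exists[OF g] .
  have "{F. max_dissociation_set V E F} = {F0}"
    using F0 tight acyclic_tight_dissociation_sets_unique[OF g acyclic] by blast
  then show ?thesis unfolding num_max_dissociation_sets_def by simp
qed

end
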